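(* Each of the following graphs is not strongly EFX-orientable: (i) the union of two odd cycles that share exactly one edge (and no other vertices); (ii) the union of two odd cycles that share exactly one vertex; (iii) the union of two vertex-disjoint odd cycles $C$ and $C'$ together with a path of length at least $1$ from a vertex of $C$ to a vertex of $C'$ whose internal vertices lie on neither cycle.
   Context: All graphs are finite and simple. For a graph $G=(V,E)$ and $v\in V$, $E(v)$ is the set of edges incident to $v$. A graphical instance on $G$ assigns to each vertex $v$ a valuation $f_v:2^E\to\mathbb{R}_{\ge 0}$ that is monotone ($A\subseteq B\Rightarrow f_v(A)\le f_v(B)$) and satisfies $f_v(X)=f_v(X\cap E(v))$ for all $X\subseteq E$. An orientation of $G$ chooses for each edge one of its endpoints as its head; vertex $v$ receives the bundle $X_v$ of edges whose head is $v$. The orientation is EFX if for all $u,v\in V$ and every $g\in X_v$, $f_u(X_u)\ge f_u(X_v\setminus\{g\})$. A graph $G$ is strongly EFX-orientable if for every graphical instance on $G$ there exists an EFX orientation. *)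

theory Defs
  imports Complex_Main
begin

(* A graph is a pair (V, E) with E a set of 2-element subsets of V. *)

definition incident :: "'v set set \<Rightarrow> 'v \<Rightarrow> 'v set set" where
  "incident E v = {e \<in> E. v \<in> e}"

definition graphical_instance :: "'v set \<Rightarrow> 'v set set \<Rightarrow> ('v \<Rightarrow> 'v set set \<Rightarrow> real) \<Rightarrow> bool" where
  "graphical_instance V E f \<longleftrightarrow>
     (\<forall>v\<in>V. \<forall>X. X \<subseteq> E \<longrightarrow> 0 \<le> f v X) \<and>
     (\<forall>v\<in>V. \<forall>A B. A \<subseteq> B \<and> B \<subseteq> E \<longrightarrow> f v A \<le> f v B) \<and>
     (\<forall>v\<in>V. \<forall>X. X \<subseteq> E \<longrightarrow> f v X = f v (X \<inter> incident E v))"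

definition is_orientation :: "'v set set \<Rightarrow> ('v set \<Rightarrow> 'v) \<Rightarrow> bool" where
  "is_orientation E h \<longleftrightarrow> (\<forall>e\<in>E. h e \<in> e)"

definition bundle_of :: "'v set set \<Rightarrow> ('v set \<Rightarrow> 'v) \<Rightarrow> 'v \<Rightarrow> 'v set set" where
  "bundle_of E h v = {e \<in> E. h e = v}"

definition EFX_orientation :: "'v set \<Rightarrow> 'v set set \<Rightarrow> ('v \<Rightarrow> 'v set set \<Rightarrow> real) \<Rightarrow> ('v set \<Rightarrow> 'v) \<Rightarrow> bool" where
  "EFX_orientation V E f h \<longleftrightarrow> is_orientation E h \<and>
     (\<forall>u\<in>V. \<forall>v\<in>V. \<forall>g\<in>bundle_of E h v. f u (bundle_of E h u) \<ge> f u (bundle_of E h v - {g}))"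

definition strongly_EFX_orientable :: "'v set \<Rightarrow> 'v set set \<Rightarrow> bool" where
  "strongly_EFX_orientable V E \<longleftrightarrow>
     (\<forall>f. graphical_instance V E f \<longrightarrow> (\<exists>h. EFX_orientation V E f h))"

definition is_cycle :: "'v list \<Rightarrow> bool" where
  "is_cycle xs \<longleftrightarrow> distinct xs \<and> length xs \<ge> 3"

definition cycle_edges :: "'v list \<Rightarrow> 'v set set" where
  "cycle_edges xs = {{xs ! i, xs ! (Suc i mod length xs)} | i. i < length xs}"

definition is_odd_cycle :: "'v list \<Rightarrow> bool" where
  "is_odd_cycle xs \<longleftrightarrow> is_cycle xs \<and> odd (length xs)"

definition is_path :: "'v list \<Rightarrow> bool" where
  "is_path ps \<longleftrightarrow> distinct ps \<and> length ps \<ge> 2"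

definition path_edges :: "'v list \<Rightarrow> 'v set set" where
  "path_edges ps = {{ps ! i, ps ! Suc i} | i. Suc i < length ps}"

definition two_odd_cycles_sharing_edge :: "'v set \<Rightarrow> 'v set set \<Rightarrow> bool" where
  "two_odd_cycles_sharing_edge V E \<longleftrightarrow>
     (\<exists>xs ys a b. is_odd_cycle xs \<and> is_odd_cycle ys \<and>
        set xs \<inter> set ys = {a, b} \<and> a \<noteq> b \<and>
        {a, b} \<in> cycle_edges xs \<and> {a, b} \<in> cycle_edges ys \<and>
        V = set xs \<union> set ys \<and> E = cycle_edges xs \<union> cycle_edges ys)"

definition two_odd_cycles_sharing_vertex :: "'v set \<Rightarrow> 'v set set \<Rightarrow> bool" where
  "two_odd_cycles_sharing_vertex V E \<longleftrightarrow>
     (\<exists>xs ys a. is_odd_cycle xs \<and> is_odd_cycle ys \<and>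
        set xs \<inter> set ys = {a} \<and>
        V = set xs \<union> set ys \<and> E = cycle_edges xs \<union> cycle_edges ys)"

definition two_odd_cycles_joined_by_path :: "'v set \<Rightarrow> 'v set set \<Rightarrow> bool" where
  "two_odd_cycles_joined_by_path V E \<longleftrightarrow>
     (\<exists>xs ys ps. is_odd_cycle xs \<and> is_odd_cycle ys \<and>
        set xs \<inter> set ys = {} \<and> is_path ps \<and>
        hd ps \<in> set xs \<and> last ps \<in> set ys \<and>
        set ps \<inter> set xs = {hd ps} \<and> set ps \<inter> set ys = {last ps} \<and>
        V = set xs \<union> set ys \<union> set ps \<and>
        E = cycle_edges xs \<union> cycle_edges ys \<union> path_edges ps)"

end

theory Submission
  imports Defs
begin

text \<open>All counterexamples use additive valuations in which almost every agent is single-minded: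
  it values exactly one incident edge, and these liked edges form perfect matchings of the cycles
  (minus a centre) and of the connecting path. If
  \<open>u\<close> strictly prefers an edge \<open>e\<close> that is given to \<open>w \<noteq> u\<close>, then \<open>w\<close> receives nothing else;
  and if \<open>w\<close> receives two edges, every agent values its own bundle at least as much as either
  edge alone. Along a path matched in consecutive pairs this makes the orientation propagate:
  once an edge is directed into the first vertex of a pair, every later edge is directed forwards.

  On an odd cycle whose centre values exactly its two cycle edges, the matching starting next to
  the centre shows that the centre cannot receive any edge from outside the cycle, while the
  matching of the other parity forces the centre to receive one of its cycle edges. Two cycles
  sharing a vertex combine both gadgets at that vertex; for two cycles joined by a path the
  gadgets sit at the two ends, and the parity of the path decides which one is used at the
  start. For two cycles sharing the edge \<open>ab\<close>, the endpoints value one incident cycle edge 2 and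
  \<open>ab\<close> 1; propagation along both \<open>a\<close>--\<open>b\<close> paths and their mirror images shows that whichever
  endpoint receives \<open>ab\<close> is envied by the other one.\<close>

section \<open>Cycles and paths\<close>

text \<open>Cycles are handled through \<open>n\<close>-periodic parametrisations, so that any vertex or edge can be
  rotated to position \<open>0\<close>.\<close>
definition cycle_param :: "(nat \<Rightarrow> 'v) \<Rightarrow> nat \<Rightarrow> 'v set \<Rightarrow> 'v set set \<Rightarrow> bool" where
  "cycle_param z n S Ed \<longleftrightarrow> 3 \<le> n \<and> (\<forall>i j. z i = z j \<longleftrightarrow> i mod n = j mod n) \<and>
     S = z ` {..<n} \<and> Ed = (\<lambda>j. {z j, z (Suc j)}) ` {..<n}"

lemma cycle_param_of_list:
  assumes "is_cycle xs"
  shows "cycle_param (\<lambda>j. xs ! (j mod length xs)) (length xs) (set xs) (cycle_edges xs)"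
proof -
  let ?n = "length xs"
  have d: "distinct xs" and n3: "3 \<le> ?n" using assms by (auto simp: is_cycle_def)
  have np: "0 < ?n" using n3 by linarith
  have "xs ! (i mod ?n) = xs ! (j mod ?n) \<longleftrightarrow> i mod ?n = j mod ?n" for i j
    using np by (simp add: nth_eq_iff_index_eq[OF d])
  moreover have "set xs = (\<lambda>j. xs ! (j mod ?n)) ` {..<?n}"
    by (auto simp: set_conv_nth image_def)
  moreover have "cycle_edges xs = (\<lambda>j. {xs ! (j mod ?n), xs ! (Suc j mod ?n)}) ` {..<?n}"
    by (auto simp: cycle_edges_def image_def)
  ultimately show ?thesis unfolding cycle_param_def using n3 by blast
qed

context
  fixes z :: "nat \<Rightarrow> 'v" and n :: nat and S :: "'v set" and Ed :: "'v set set"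
  assumes cyc: "cycle_param z n S Ed"
begin

lemma cycle_param_eq_iff: "z i = z j \<longleftrightarrow> i mod n = j mod n"
  using cyc by (simp add: cycle_param_def)

lemma cycle_param_length: "3 \<le> n"
  using cyc by (simp add: cycle_param_def)

lemma cycle_param_period: "z n = z 0"
  by (simp add: cycle_param_eq_iff)

lemma cycle_param_mem: "z i \<in> S"
proof -
  have "z (i mod n) \<in> z ` {..<n}" using cycle_param_length by simp
  moreover have "z (i mod n) = z i" by (simp add: cycle_param_eq_iff)
  ultimately show ?thesis using cyc by (simp add: cycle_param_def)
qed

lemma cycle_param_vertexE:
  assumes "v \<in> S"
  obtains j where "j < n" "z j = v"
  using assms cyc by (auto simp: cycle_param_def)

lemma cycle_param_edge: "{z i, z (Suc i)} \<in> Ed"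
proof -
  have "z i = z (i mod n)" "z (Suc i) = z (Suc (i mod n))"
    by (simp_all add: cycle_param_eq_iff mod_Suc_eq)
  moreover have "{z (i mod n), z (Suc (i mod n))} \<in> Ed"
    using cyc cycle_param_length unfolding cycle_param_def by auto
  ultimately show ?thesis by simp
qed

lemma cycle_param_edgeE:
  assumes "e \<in> Ed"
  obtains j where "j < n" "e = {z j, z (Suc j)}"
  using assms cyc by (auto simp: cycle_param_def)

lemma cycle_param_edge_subset: "e \<in> Ed \<Longrightarrow> e \<subseteq> S"
  using cycle_param_edgeE cycle_param_mem by blast

lemma cycle_param_finite_edges: "finite Ed"
  using cyc by (simp add: cycle_param_def)

lemma cycle_param_inj_window:
  assumes "s \<le> i" "i < j" "j < s + n"
  shows "z i \<noteq> z j"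
proof
  assume "z i = z j"
  then have "n dvd j - i"
    using assms mod_eq_dvd_iff_nat[of i j n] by (simp add: cycle_param_eq_iff)
  then show False using assms by (auto dest: dvd_imp_le)
qed

lemma cycle_param_ne_start: "0 < j \<Longrightarrow> j < n \<Longrightarrow> z j \<noteq> z 0"
  using cycle_param_inj_window[of 0 0 j] by auto

lemma cycle_param_edges_at_start: "{z 0, z 1} \<in> Ed" "{z (n - 1), z 0} \<in> Ed"
  using cycle_param_edge[of 0] cycle_param_edge[of "n - 1"] cycle_param_length cycle_param_period
  by auto

lemma cycle_param_shift: "cycle_param (\<lambda>j. z (p + j)) n S Ed"
proof -
  have np: "0 < n" using cycle_param_length by simp
  define k where "k j = (j + (n - p mod n)) mod n" for j
  have "(p + k j) mod n = j mod n" for j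
  proof -
    have "(p + k j) mod n = (p + (j + (n - p mod n))) mod n"
      by (simp add: k_def mod_add_right_eq)
    also have "p + (j + (n - p mod n)) = j + n + p div n * n"
      using np mod_less_divisor[of n p] div_mult_mod_eq[of p n] by linarith
    finally show ?thesis by simp
  qed
  then have k: "z (p + k j) = z j" "k j < n" for j
    using np by (simp_all add: cycle_param_eq_iff k_def)
  have "S = (\<lambda>j. z (p + j)) ` {..<n}"
  proof (intro subset_antisym subsetI)
    fix v assume "v \<in> S"
    then obtain j where "v = z j" using cycle_param_vertexE by blast
    then show "v \<in> (\<lambda>j. z (p + j)) ` {..<n}" using k by (metis image_eqI lessThan_iff)
  qed (use cycle_param_mem in auto)
  moreover have "Ed = (\<lambda>j. {z (p + j), z (Suc (p + j))}) ` {..<n}"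
  proof (intro subset_antisym subsetI)
    fix e assume "e \<in> Ed"
    then obtain j where e: "e = {z j, z (Suc j)}" using cycle_param_edgeE by blast
    have "z (Suc (p + k j)) = z (Suc j)" using k(1)[of j] by (metis cycle_param_eq_iff mod_Suc_eq)
    then show "e \<in> (\<lambda>j. {z (p + j), z (Suc (p + j))}) ` {..<n}"
      using e k by (metis (no_types, lifting) image_eqI lessThan_iff)
  qed (use cycle_param_edge in auto)
  moreover have "z (p + i) = z (p + j) \<longleftrightarrow> i mod n = j mod n" for i j
    by (simp add: cycle_param_eq_iff nat_mod_eq_iff)
  ultimately show ?thesis unfolding cycle_param_def using cycle_param_length by simp
qed

lemma cycle_param_reverse: "cycle_param (\<lambda>j. z (n - j mod n)) n S Ed"
proof -
  have np: "0 < n" using cycle_param_length by simp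
  have zn: "z n = z 0" by (rule cycle_param_period)
  have neg_inj: "(n - a) mod n = (n - b) mod n \<longleftrightarrow> a = b" if "a < n" "b < n" for a b
    using that by (cases "a = 0"; cases "b = 0") auto
  have neg_neg: "z (n - ((n - j) mod n) mod n) = z j" if "j < n" for j
    using that zn by (cases "j = 0") auto
  have "S = (\<lambda>j. z (n - j mod n)) ` {..<n}"
  proof (intro subset_antisym subsetI)
    fix v assume "v \<in> S"
    then obtain j where "j < n" "v = z j" using cycle_param_vertexE by blast
    then have "v = z (n - ((n - j) mod n) mod n)" using neg_neg by simp
    moreover have "(n - j) mod n < n" using np by simp
    ultimately show "v \<in> (\<lambda>j. z (n - j mod n)) ` {..<n}" by blast
  qed (use cycle_param_mem in auto)
  moreover have "Ed = (\<lambda>j. {z (n - j mod n), z (n - Suc j mod n)}) ` {..<n}"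
  proof (intro subset_antisym subsetI)
    fix e assume "e \<in> Ed"
    then obtain j where j: "j < n" "e = {z j, z (Suc j)}" using cycle_param_edgeE by blast
    define k where "k = n - Suc j"
    have "{z (n - k mod n), z (n - Suc k mod n)} = {z (Suc j), z j}"
      using j zn by (cases "j = 0") (auto simp: k_def Suc_diff_Suc)
    then have "e = {z (n - k mod n), z (n - Suc k mod n)}"
      using j(2) by (simp add: insert_commute)
    moreover have "k < n" using j by (simp add: k_def)
    ultimately show "e \<in> (\<lambda>j. {z (n - j mod n), z (n - Suc j mod n)}) ` {..<n}"
      by blast
  next
    fix e assume "e \<in> (\<lambda>j. {z (n - j mod n), z (n - Suc j mod n)}) ` {..<n}"
    then obtain j where j: "j < n" "e = {z (n - j mod n), z (n - Suc j mod n)}" by auto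
    have "z (n - j mod n) = z (Suc (n - Suc j mod n))"
    proof (cases "Suc j = n")
      case True
      then have "n - j mod n = 1" "n - Suc j mod n = n" using j by auto
      moreover have "z (Suc n) = z 1" using mod_Suc_eq[of n n] by (simp add: cycle_param_eq_iff)
      ultimately show ?thesis by simp
    next
      case False
      then show ?thesis using j by (simp add: Suc_diff_Suc)
    qed
    then show "e \<in> Ed" using j cycle_param_edge by (simp add: insert_commute)
  qed
  moreover have "z (n - i mod n) = z (n - j mod n) \<longleftrightarrow> i mod n = j mod n" for i j
    using np neg_inj by (simp add: cycle_param_eq_iff)
  ultimately show ?thesis unfolding cycle_param_def using cycle_param_length by simp
qed

end

lemma cycle_param_recenter:
  assumes cyc: "cycle_param z n S Ed" and "c \<in> S"
  obtains z' where "cycle_param z' n S Ed" "z' 0 = c"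
proof -
  obtain j where "z j = c" using cycle_param_vertexE[OF cyc] assms(2) by blast
  then show ?thesis using that cycle_param_shift[OF cyc, of j] by simp
qed

lemma cycle_param_through_edge:
  assumes cyc: "cycle_param z n S Ed" and "{a, b} \<in> Ed"
  obtains z' where "cycle_param z' n S Ed" "z' 0 = a" "z' (n - 1) = b"
proof -
  have n3: "3 \<le> n" by (rule cycle_param_length[OF cyc])
  obtain j where "{a, b} = {z j, z (Suc j)}" using cycle_param_edgeE[OF cyc] assms(2) by blast
  then consider "a = z j" "b = z (Suc j)" | "a = z (Suc j)" "b = z j"
    by (auto simp: doubleton_eq_iff)
  then show ?thesis
  proof cases
    case 1
    have shifted: "cycle_param (\<lambda>t. z (j + t)) n S Ed" by (rule cycle_param_shift[OF cyc])
    have "z (j + n) = a" using 1 cycle_param_eq_iff[OF cyc, of "j + n" j] by simp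
    moreover have "n - (n - 1) mod n = 1" using n3 by simp
    ultimately show ?thesis
      using that[OF cycle_param_reverse[OF shifted]] 1 by simp
  next
    case 2
    have "z (Suc j + (n - 1)) = z j" using n3 by (simp add: cycle_param_eq_iff[OF cyc])
    then show ?thesis using that[OF cycle_param_shift[OF cyc, of "Suc j"]] 2 by simp
  qed
qed

definition path_on :: "'v set \<Rightarrow> 'v set set \<Rightarrow> (nat \<Rightarrow> 'v) \<Rightarrow> nat \<Rightarrow> nat \<Rightarrow> bool" where
  "path_on V E z s r \<longleftrightarrow>
     (\<forall>i. s \<le> i \<longrightarrow> i \<le> r \<longrightarrow> z i \<in> V) \<and> (\<forall>i. s \<le> i \<longrightarrow> i < r \<longrightarrow> {z i, z (Suc i)} \<in> E) \<and>
     (\<forall>i j. s \<le> i \<longrightarrow> i < j \<longrightarrow> j \<le> r \<longrightarrow> z i \<noteq> z j)"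

lemma path_onD:
  assumes "path_on V E z s r"
  shows path_on_vertex: "s \<le> i \<Longrightarrow> i \<le> r \<Longrightarrow> z i \<in> V"
    and path_on_edge: "s \<le> i \<Longrightarrow> i < r \<Longrightarrow> {z i, z (Suc i)} \<in> E"
    and path_on_inj: "s \<le> i \<Longrightarrow> i < j \<Longrightarrow> j \<le> r \<Longrightarrow> z i \<noteq> z j"
  using assms by (auto simp: path_on_def)

lemma path_on_subpath: "path_on V E z s r \<Longrightarrow> s \<le> s' \<Longrightarrow> r' \<le> r \<Longrightarrow> path_on V E z s' r'"
  by (auto simp: path_on_def)

lemma path_on_inj_on:
  assumes "path_on V E z 0 l"
  shows "inj_on z {..<Suc l}"
proof (rule inj_onI, rule ccontr)
  fix i j assume "i \<in> {..<Suc l}" "j \<in> {..<Suc l}" "z i = z j" "i \<noteq> j"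
  then show False
    using path_on_inj[OF assms, of i j] path_on_inj[OF assms, of j i] by (cases "i < j") auto
qed

lemma path_on_of_inj_on:
  assumes "inj_on z {..l}" "z ` {..l} \<subseteq> V" "(\<lambda>i. {z i, z (Suc i)}) ` {..<l} \<subseteq> E"
  shows "path_on V E z 0 l"
  using assms unfolding path_on_def by (auto dest: inj_onD)

lemma path_on_reverse:
  assumes "path_on V E z 0 k"
  shows "path_on V E (\<lambda>t. z (k - t)) 0 k"
proof -
  have "{z (k - i), z (k - Suc i)} \<in> E" if "i < k" for i
    using path_on_edge[OF assms, of "k - Suc i"] that by (simp add: Suc_diff_Suc insert_commute)
  moreover have "z (k - i) \<noteq> z (k - j)" if "i < j" "j \<le> k" for i j
  proof -
    have "k - j < k - i" using that by simp
    then show ?thesis using path_on_inj[OF assms, of "k - j" "k - i"] that by auto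
  qed
  ultimately show ?thesis
    using assms by (auto simp: path_on_def)
qed

lemma cycle_param_path_on:
  assumes "cycle_param z n S Ed" "S \<subseteq> V" "Ed \<subseteq> E" "r < s + n"
  shows "path_on V E z s r"
  using assms cycle_param_mem[OF assms(1)] cycle_param_edge[OF assms(1)]
    cycle_param_inj_window[OF assms(1)] unfolding path_on_def by fastforce

text \<open>The edge at position \<open>j\<close> of a perfect matching of the walk \<open>z\<close>: for \<open>p = True\<close> the
  matching pairs \<open>(0,1), (2,3), \<dots>\<close>, for \<open>p = False\<close> it pairs \<open>(1,2), (3,4), \<dots>\<close>.\<close>
definition matched_edge :: "bool \<Rightarrow> (nat \<Rightarrow> 'v) \<Rightarrow> nat \<Rightarrow> 'v set" where
  "matched_edge p z j = (if even j = p then {z j, z (Suc j)} else {z (j - 1), z j})"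

lemma matched_edge_mem: "z j \<in> matched_edge p z j"
  by (simp add: matched_edge_def)

lemma matched_edge_reverse:
  assumes "even k" "1 \<le> j" "j < k"
  shows "matched_edge p (\<lambda>t. z (k - t)) j = matched_edge (\<not> p) z (k - j)"
proof -
  have "even (k - j) \<longleftrightarrow> even j" using assms by auto
  moreover have "k - Suc j = k - j - 1" "k - (j - 1) = Suc (k - j)" using assms by auto
  ultimately show ?thesis by (auto simp: matched_edge_def insert_commute)
qed

lemma path_on_matched_edge:
  "path_on V E z s r \<Longrightarrow> s < j \<Longrightarrow> j < r \<Longrightarrow> matched_edge p z j \<in> E"
  using path_on_edge[of V E z s r j] path_on_edge[of V E z s r "j - 1"]
  by (auto simp: matched_edge_def)

lemma cycle_param_matched_edge:
  "cycle_param z n S Ed \<Longrightarrow> 1 \<le> j \<Longrightarrow> matched_edge p z j \<in> Ed"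
  using cycle_param_edge[of z n S Ed j] cycle_param_edge[of z n S Ed "j - 1"]
  by (auto simp: matched_edge_def)

definition param_index :: "(nat \<Rightarrow> 'v) \<Rightarrow> nat \<Rightarrow> 'v \<Rightarrow> nat" where
  "param_index z n v = (THE j. j < n \<and> z j = v)"

lemma param_index_eq:
  assumes "inj_on z {..<n}" "j < n"
  shows "param_index z n (z j) = j"
  unfolding param_index_def
  by (rule the_equality) (use assms in \<open>auto dest: inj_onD\<close>)

lemma cycle_param_inj_on: "cycle_param z n S Ed \<Longrightarrow> inj_on z {..<n}"
  by (auto intro!: inj_onI simp: cycle_param_eq_iff)

section \<open>Consequences of EFX\<close>

definition prefers :: "('v \<Rightarrow> 'v set set \<Rightarrow> real) \<Rightarrow> 'v set set \<Rightarrow> 'v \<Rightarrow> 'v set \<Rightarrow> bool" where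
  "prefers f E u b \<longleftrightarrow> (\<forall>X. X \<subseteq> E \<longrightarrow> b \<notin> X \<longrightarrow> f u X < f u {b})"

definition prefers_pair ::
    "('v \<Rightarrow> 'v set set \<Rightarrow> real) \<Rightarrow> 'v set set \<Rightarrow> 'v \<Rightarrow> 'v set \<Rightarrow> 'v set \<Rightarrow> bool" where
  "prefers_pair f E u b c \<longleftrightarrow>
     (\<forall>X. X \<subseteq> E \<longrightarrow> b \<notin> X \<longrightarrow> c \<notin> X \<longrightarrow> f u X < f u {b} \<and> f u X < f u {c})"

locale EFX_oriented =
  fixes V :: "'v set" and E :: "'v set set" and f :: "'v \<Rightarrow> 'v set set \<Rightarrow> real"
    and h :: "'v set \<Rightarrow> 'v"
  assumes graphical: "graphical_instance V E f"
    and EFX: "EFX_orientation V E f h"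
begin

lemma head_mem: "e \<in> E \<Longrightarrow> h e \<in> e"
  using EFX by (auto simp: EFX_orientation_def is_orientation_def)

lemma head_doubleton: "{x, y} \<in> E \<Longrightarrow> h {x, y} = x \<or> h {x, y} = y"
  using head_mem by blast

lemma bundle_subset: "bundle_of E h u \<subseteq> E"
  by (auto simp: bundle_of_def)

lemma bundle_value_ge_of_shared_head:
  assumes "u \<in> V" "w \<in> V" "e \<in> E" "g \<in> E" "e \<noteq> g" "h e = w" "h g = w"
  shows "f u {e} \<le> f u (bundle_of E h u)"
proof -
  have g: "g \<in> bundle_of E h w" and sub: "{e} \<subseteq> bundle_of E h w - {g}" "bundle_of E h w - {g} \<subseteq> E"
    using assms by (auto simp: bundle_of_def)
  have "f u {e} \<le> f u (bundle_of E h w - {g})"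
    using graphical assms(1) sub unfolding graphical_instance_def by blast
  moreover have "f u (bundle_of E h w - {g}) \<le> f u (bundle_of E h u)"
    using EFX assms(1,2) g unfolding EFX_orientation_def by blast
  ultimately show ?thesis by linarith
qed

text \<open>An agent who prefers \<open>e\<close> but does not receive it cannot tolerate a second edge at the head of
  \<open>e\<close>: removing that edge from the head's bundle would leave \<open>e\<close>.\<close>
lemma preferred_edge_alone:
  assumes "u \<in> V" "w \<in> V" "prefers f E u e" "e \<in> E" "g \<in> E" "h e = w" "h g = w" "w \<noteq> u"
  shows "g = e"
proof (rule ccontr)
  assume "g \<noteq> e"
  then have "f u {e} \<le> f u (bundle_of E h u)"
    using bundle_value_ge_of_shared_head assms by metis
  moreover have "e \<notin> bundle_of E h u" using assms by (auto simp: bundle_of_def)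
  then have "f u (bundle_of E h u) < f u {e}"
    using assms(3) bundle_subset by (simp add: prefers_def)
  ultimately show False by linarith
qed

lemma preferred_edge_head:
  assumes "u \<in> V" "v \<in> V" "u \<noteq> v" "prefers f E u {u, v}" "{u, v} \<in> E"
    and "g \<in> E" "g \<noteq> {u, v}" "h g = v"
  shows "h {u, v} = u"
  using head_doubleton[OF assms(5)] preferred_edge_alone[OF assms(1,2,4,5,6)] assms(3,7,8) by auto

lemma prefers_pair_no_shared_head:
  assumes "u \<in> V" "w \<in> V" "prefers_pair f E u b c" "b \<notin> bundle_of E h u" "c \<notin> bundle_of E h u"
    and "e \<in> {b, c}" "e \<in> E" "g \<in> E" "e \<noteq> g" "h e = w" "h g = w"
  shows False
proof -
  have "f u (bundle_of E h u) < f u {e}"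
    using assms(3-6) bundle_subset unfolding prefers_pair_def by blast
  moreover have "f u {e} \<le> f u (bundle_of E h u)"
    by (rule bundle_value_ge_of_shared_head[OF assms(1,2,7-11)])
  ultimately show False by linarith
qed

lemma matched_pair_step:
  assumes path: "path_on V E z s r" and "s \<le> t" "Suc (Suc t) \<le> r"
    and pref: "prefers f E (z t) {z t, z (Suc t)}" "prefers f E (z (Suc t)) {z t, z (Suc t)}"
    and incoming: "b \<in> E" "h b = z t" "b \<noteq> {z t, z (Suc t)}"
  shows "h {z (Suc t), z (Suc (Suc t))} = z (Suc (Suc t))"
proof -
  have V: "z t \<in> V" "z (Suc t) \<in> V" and E: "{z t, z (Suc t)} \<in> E" "{z (Suc t), z (Suc (Suc t))} \<in> E"
    using path_on_vertex[OF path] path_on_edge[OF path] assms(2,3) by auto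
  have ne: "z t \<noteq> z (Suc t)" "z (Suc t) \<noteq> z (Suc (Suc t))" "z t \<noteq> z (Suc (Suc t))"
    using path_on_inj[OF path] assms(2,3) by auto
  have "h {z (Suc t), z t} = z (Suc t)"
    using preferred_edge_head[OF V(2,1) _ _ _ incoming(1) _ incoming(2)] pref(2) E(1) incoming(3) ne
    by (simp add: insert_commute)
  then have "h {z (Suc t), z (Suc (Suc t))} \<noteq> z (Suc t)"
    using preferred_edge_alone[OF V pref(1) E] ne by (auto simp: insert_commute doubleton_eq_iff)
  then show ?thesis using head_doubleton[OF E(2)] by blast
qed

lemma propagate_matching:
  assumes path: "path_on V E z s r" and "s < r" "even (r - s)"
    and pref: "\<And>i. s \<le> i \<Longrightarrow> i < r \<Longrightarrow> prefers f E (z i) (matched_edge (even s) z i)"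
    and a: "a \<in> E" "h a = z s" "a \<noteq> {z s, z (Suc s)}"
  shows "h {z (r - 1), z r} = z r"
proof -
  have pair: "prefers f E (z t) {z t, z (Suc t)}" "prefers f E (z (Suc t)) {z t, z (Suc t)}"
    if "s \<le> t" "even (t - s)" "Suc t < r" for t
    using pref[of t] pref[of "Suc t"] that by (auto simp: matched_edge_def)
  have chain: "h {z (s + 2 * k + 1), z (s + 2 * k + 2)} = z (s + 2 * k + 2)"
    if "s + 2 * k + 2 \<le> r" for k
    using that
  proof (induction k)
    case 0
    then show ?case using matched_pair_step[OF path, of s] pair[of s] a by simp
  next
    case (Suc k)
    let ?t = "s + 2 * k + 2"
    have "z (?t - 1) \<noteq> z (Suc ?t)"
      using path_on_inj[OF path, of "?t - 1" "Suc ?t"] Suc.prems by simp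
    then have "{z (?t - 1), z ?t} \<noteq> {z ?t, z (Suc ?t)}" by (auto simp: doubleton_eq_iff)
    moreover have "{z (?t - 1), z ?t} \<in> E"
      using path_on_edge[OF path, of "?t - 1"] Suc.prems by simp
    moreover have "h {z (?t - 1), z ?t} = z ?t" using Suc by simp
    ultimately have "h {z (Suc ?t), z (Suc (Suc ?t))} = z (Suc (Suc ?t))"
      using matched_pair_step[OF path, of ?t] pair[of ?t] Suc.prems by simp
    then show ?case by (simp add: add.assoc)
  qed
  define k where "k = (r - s) div 2 - 1"
  have "r = s + 2 * k + 2" using assms(2,3) unfolding k_def by presburger
  then show ?thesis using chain[of k] by simp
qed

lemma propagate_matching_from_path_edge:
  assumes path: "path_on V E z (s - 1) r" and "1 \<le> s" "s \<le> r" "even (r - s)"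
    and pref: "\<And>i. s \<le> i \<Longrightarrow> i < r \<Longrightarrow> prefers f E (z i) (matched_edge (even s) z i)"
    and incoming: "h {z (s - 1), z s} = z s"
  shows "h {z (r - 1), z r} = z r"
proof (cases "s = r")
  case False
  have "z (s - 1) \<noteq> z (Suc s)" using path_on_inj[OF path, of "s - 1" "Suc s"] assms(2-4) False
    by (simp add: not_less_eq_eq)
  then have "{z (s - 1), z s} \<noteq> {z s, z (Suc s)}" by (auto simp: doubleton_eq_iff)
  moreover have "{z (s - 1), z s} \<in> E"
    using path_on_edge[OF path, of "s - 1"] assms(2,3) False by simp
  ultimately show ?thesis
    using propagate_matching[OF path_on_subpath[OF path] _ assms(4) pref] assms(2,3) False incoming
    by simp
qed (use incoming in simp)

lemma cycle_edges_at_center_point_away: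
  assumes cyc: "cycle_param z n S Ed" and "S \<subseteq> V" "Ed \<subseteq> E"
    and pref: "prefers f E (z 1) {z 1, z 0}" "prefers f E (z (n - 1)) {z (n - 1), z 0}"
    and outside: "c \<in> E" "c \<notin> Ed" "h c = z 0"
  shows "h {z 1, z 0} = z 1" "h {z (n - 1), z 0} = z (n - 1)"
proof -
  have n3: "3 \<le> n" by (rule cycle_param_length[OF cyc])
  have zV: "z i \<in> V" for i using cycle_param_mem[OF cyc] assms(2) by blast
  have edges: "{z 1, z 0} \<in> Ed" "{z (n - 1), z 0} \<in> Ed"
    using cycle_param_edges_at_start[OF cyc] by (auto simp: insert_commute)
  then have "c \<noteq> {z 1, z 0}" "c \<noteq> {z (n - 1), z 0}" using outside(2) by auto
  moreover have "z 1 \<noteq> z 0" "z (n - 1) \<noteq> z 0" using cycle_param_ne_start[OF cyc] n3 by auto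
  ultimately show "h {z 1, z 0} = z 1" "h {z (n - 1), z 0} = z (n - 1)"
    using preferred_edge_head[OF zV zV _ _ _ outside(1) _ outside(3)] pref edges assms(3) by auto
qed

lemma odd_cycle_center_trapped:
  assumes cyc: "cycle_param z n S Ed" and "odd n" "S \<subseteq> V" "Ed \<subseteq> E"
    and pref: "\<And>j. 1 \<le> j \<Longrightarrow> j < n \<Longrightarrow> prefers f E (z j) (matched_edge True z j)"
    and center: "prefers_pair f E (z 0) {z 0, z 1} {z (n - 1), z 0}"
    and outside: "c \<in> E" "c \<notin> Ed" "h c = z 0"
  shows False
proof -
  have n3: "3 \<le> n" by (rule cycle_param_length[OF cyc])
  have zn: "z n = z 0" by (rule cycle_param_period[OF cyc])
  have path: "path_on V E z 1 n" by (rule cycle_param_path_on[OF cyc assms(3,4)]) simp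
  have zV: "z i \<in> V" for i using cycle_param_mem[OF cyc] assms(3) by blast
  have edge: "{z i, z (Suc i)} \<in> E" for i using cycle_param_edge[OF cyc] assms(4) by blast
  have ne: "z i \<noteq> z j" if "1 \<le> i" "i < j" "j \<le> n" for i j
    using path_on_inj[OF path] that by blast
  have "prefers f E (z 1) {z 1, z 0}" "prefers f E (z (n - 1)) {z (n - 1), z 0}"
    using pref[of 1] pref[of "n - 1"] \<open>odd n\<close> n3 zn by (auto simp: matched_edge_def insert_commute)
  note away = cycle_edges_at_center_point_away[OF cyc assms(3,4) this outside]
  then have first: "h {z 0, z 1} = z 1" and last: "h {z (n - 1), z 0} = z (n - 1)"
    by (simp_all add: insert_commute)
  then have poor: "{z 0, z 1} \<notin> bundle_of E h (z 0)" "{z (n - 1), z 0} \<notin> bundle_of E h (z 0)"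
    using ne[of 1 n] ne[of "n - 1" n] n3 zn by (auto simp: bundle_of_def)
  have "z 0 \<noteq> z 2" using ne[of 2 n] n3 zn by auto
  then have "{z 0, z 1} \<noteq> {z 1, z 2}" by (auto simp: doubleton_eq_iff)
  moreover have e12: "{z 1, z 2} \<in> E" using edge[of 1] by (simp add: numeral_2_eq_2)
  ultimately have "h {z 1, z 2} \<noteq> z 1"
    using prefers_pair_no_shared_head[OF zV[of 0] zV[of 1] center poor,
        of "{z 0, z 1}" "{z 1, z 2}"]
      first edge[of 0] by auto
  then have "h {z (2 - 1), z 2} = z 2" using head_doubleton[OF e12] by simp
  moreover have "\<And>i. 2 \<le> i \<Longrightarrow> i < n - 1 \<Longrightarrow> prefers f E (z i) (matched_edge (even 2) z i)"
    using pref by simp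
  moreover have "path_on V E z (2 - 1) (n - 1)" using path_on_subpath[OF path] by simp
  moreover have "even (n - 1 - 2)" "2 \<le> n - 1" using \<open>odd n\<close> n3 by auto
  ultimately have "h {z (n - 1 - 1), z (n - 1)} = z (n - 1)"
    using propagate_matching_from_path_edge[of z 2 "n - 1"] by simp
  moreover have "z (n - 1 - 1) \<noteq> z 0" using ne[of "n - 1 - 1" n] n3 zn by simp
  moreover have "Suc (n - 1 - 1) = n - 1" using n3 by simp
  then have "{z (n - 1 - 1), z (n - 1)} \<in> E" using edge[of "n - 1 - 1"] by simp
  ultimately show False
    using prefers_pair_no_shared_head[OF zV[of 0] zV[of "n - 1"] center poor,
        of "{z (n - 1), z 0}" "{z (n - 1 - 1), z (n - 1)}"]
      last edge[of "n - 1"] n3 zn by (auto simp: doubleton_eq_iff)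
qed

lemma odd_cycle_center_gets_cycle_edge:
  assumes cyc: "cycle_param z n S Ed" and "odd n" "S \<subseteq> V" "Ed \<subseteq> E"
    and pref: "\<And>j. 1 \<le> j \<Longrightarrow> j < n \<Longrightarrow> prefers f E (z j) (matched_edge False z j)"
  shows "h {z 0, z 1} = z 0 \<or> h {z (n - 1), z 0} = z 0"
proof (cases "h {z 0, z 1} = z 0")
  case False
  moreover have e01: "{z 0, z 1} \<in> E" using cycle_param_edge[OF cyc, of 0] assms(4) by auto
  ultimately have h01: "h {z 0, z 1} = z 1" using head_doubleton by blast
  have n3: "3 \<le> n" by (rule cycle_param_length[OF cyc])
  have path: "path_on V E z 1 n" by (rule cycle_param_path_on[OF cyc assms(3,4)]) simp
  have "z 0 \<noteq> z 2" using path_on_inj[OF path, of 2 n] n3 cycle_param_period[OF cyc] by auto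
  then have ne: "{z 0, z 1} \<noteq> {z 1, z (Suc 1)}" by (auto simp: doubleton_eq_iff numeral_2_eq_2)
  have "even (n - 1)" using assms(2) by simp
  moreover have "\<And>i. 1 \<le> i \<Longrightarrow> i < n \<Longrightarrow> prefers f E (z i) (matched_edge (even 1) z i)"
    using pref by simp
  ultimately have "h {z (n - 1), z n} = z n"
    using propagate_matching[OF path _ _ _ e01 h01 ne] n3 by simp
  then show ?thesis using cycle_param_period[OF cyc] by simp
qed simp

end

section \<open>Additive valuations\<close>

definition additive_val :: "'v set set \<Rightarrow> ('v \<Rightarrow> 'v set \<Rightarrow> real) \<Rightarrow> 'v \<Rightarrow> 'v set set \<Rightarrow> real" where
  "additive_val E wt v X = (\<Sum>e \<in> X \<inter> incident E v. wt v e)"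

lemma graphical_instance_additive_val:
  assumes "finite E" "\<And>v e. 0 \<le> wt v e"
  shows "graphical_instance V E (additive_val E wt)"
proof -
  have "additive_val E wt v A \<le> additive_val E wt v B" if "A \<subseteq> B" "B \<subseteq> E" for v A B
  proof -
    have "finite (B \<inter> incident E v)" using assms(1) that(2) by (meson finite_Int finite_subset)
    then show ?thesis unfolding additive_val_def using that assms(2) by (intro sum_mono2) auto
  qed
  then show ?thesis
    unfolding graphical_instance_def using assms(2)
    by (auto simp: additive_val_def Int_assoc intro: sum_nonneg)
qed

lemma additive_val_two_edges:
  assumes "finite E" "b \<in> E" "c \<in> E" "u \<in> b" "u \<in> c"
    and zero: "\<And>e. e \<noteq> b \<Longrightarrow> e \<noteq> c \<Longrightarrow> wt u e = 0" and "X \<subseteq> E"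
  shows "additive_val E wt u X = (\<Sum>e \<in> X \<inter> {b, c}. wt u e)"
  unfolding additive_val_def
proof (rule sum.mono_neutral_right)
  show "finite (X \<inter> incident E u)" using assms(1) by (simp add: incident_def)
qed (use assms in \<open>auto simp: incident_def\<close>)

lemma prefers_additive_val:
  assumes "finite E" "b \<in> E" "u \<in> b" "0 < wt u b" "\<And>e. e \<noteq> b \<Longrightarrow> wt u e = 0"
  shows "prefers (additive_val E wt) E u b"
  unfolding prefers_def
  using additive_val_two_edges[of E b b u wt] assms by auto

lemma prefers_pair_liked_edges:
  assumes "finite E" "b \<in> E" "c \<in> E" "u \<in> b" "u \<in> c" "b \<noteq> c"
    and "L u = {b, c}"
  shows "prefers_pair (additive_val E (\<lambda>v e. of_bool (e \<in> L v))) E u b c"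
  unfolding prefers_pair_def
  using additive_val_two_edges[of E b c u "\<lambda>v e. of_bool (e \<in> L v)"] assms by auto

lemma prefers_liked_edge:
  assumes "finite E" "b \<in> E" "u \<in> b" "L u = {b}"
  shows "prefers (additive_val E (\<lambda>v e. of_bool (e \<in> L v))) E u b"
  by (rule prefers_additive_val) (use assms in auto)

lemma prefers_liked_cycle_edge:
  assumes "finite E" "cycle_param z n S Ed" "Ed \<subseteq> E" "1 \<le> j" "j < n"
    and "L (z j) = {matched_edge p z (param_index z n (z j))}"
  shows "prefers (additive_val E (\<lambda>v e. of_bool (e \<in> L v))) E (z j) (matched_edge p z j)"
proof (rule prefers_liked_edge[OF assms(1) _ matched_edge_mem])
  show "matched_edge p z j \<in> E" using cycle_param_matched_edge[OF assms(2,4)] assms(3) by blast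
  show "L (z j) = {matched_edge p z j}"
    using param_index_eq[OF cycle_param_inj_on[OF assms(2)] assms(5)] assms(6) by simp
qed

lemma prefers_liked_path_edge:
  assumes "finite E" "path_on V E z 0 l" "0 < j" "j < l"
    and "L (z j) = {matched_edge p z (param_index z (Suc l) (z j))}"
  shows "prefers (additive_val E (\<lambda>v e. of_bool (e \<in> L v))) E (z j) (matched_edge p z j)"
proof (rule prefers_liked_edge[OF assms(1) path_on_matched_edge[OF assms(2-4)] matched_edge_mem])
  show "L (z j) = {matched_edge p z j}"
    using param_index_eq[OF path_on_inj_on[OF assms(2)], of j] assms(4,5) by simp
qed

lemma prefers_pair_liked_cycle_edges:
  assumes "finite E" "cycle_param z n S Ed" "Ed \<subseteq> E" "L (z 0) = {{z 0, z 1}, {z (n - 1), z 0}}"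
  shows "prefers_pair (additive_val E (\<lambda>v e. of_bool (e \<in> L v))) E (z 0)
           {z 0, z 1} {z (n - 1), z 0}"
proof (rule prefers_pair_liked_edges[OF assms(1)])
  show "{z 0, z 1} \<noteq> {z (n - 1), z 0}"
    using cycle_param_inj_window[OF assms(2), of 0 1 "n - 1"] cycle_param_length[OF assms(2)]
    by (auto simp: doubleton_eq_iff)
qed (use cycle_param_edges_at_start[OF assms(2)] assms(3,4) in auto)

lemma prefers_favourite_additive_val:
  assumes "finite E" "b \<in> E" "c \<in> E" "u \<in> b" "u \<in> c" "b \<noteq> c"
    and "\<And>e. wt u e = 2 * of_bool (e = b) + of_bool (e = c)"
  shows "prefers (additive_val E wt) E u b" "prefers_pair (additive_val E wt) E u b c"
proof -
  have "additive_val E wt u X = (if b \<in> X then 2 else 0) + (if c \<in> X then 1 else 0)"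
    if "X \<subseteq> E" for X
  proof -
    have "X \<inter> {b, c} = (if b \<in> X then {b} else {}) \<union> (if c \<in> X then {c} else {})" by auto
    then show ?thesis using additive_val_two_edges[of E b c u wt X] assms that by auto
  qed
  then show "prefers (additive_val E wt) E u b" "prefers_pair (additive_val E wt) E u b c"
    unfolding prefers_def prefers_pair_def using assms(2,3) by auto
qed

lemma not_strongly_EFX_orientableI:
  assumes "graphical_instance V E f" "\<And>h. EFX_oriented V E f h \<Longrightarrow> False"
  shows "\<not> strongly_EFX_orientable V E"
  using assms EFX_oriented.intro unfolding strongly_EFX_orientable_def by blast

section \<open>Two odd cycles sharing a vertex\<close>

context EFX_oriented
begin

lemma cycles_sharing_vertex_contradiction:
  assumes cz: "cycle_param z n S Ed" and cw: "cycle_param w m S' Ed'" and "odd n" "odd m"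
    and sub: "S \<subseteq> V" "S' \<subseteq> V" "Ed \<subseteq> E" "Ed' \<subseteq> E"
    and "w 0 = z 0" "w 1 \<notin> S" "w (m - 1) \<notin> S"
    and pref_z: "\<And>j. 1 \<le> j \<Longrightarrow> j < n \<Longrightarrow> prefers f E (z j) (matched_edge True z j)"
    and pref_w: "\<And>j. 1 \<le> j \<Longrightarrow> j < m \<Longrightarrow> prefers f E (w j) (matched_edge False w j)"
    and center: "prefers_pair f E (z 0) {z 0, z 1} {z (n - 1), z 0}"
  shows False
proof -
  have "{w 0, w 1} \<notin> Ed" "{w (m - 1), w 0} \<notin> Ed"
    using cycle_param_edge_subset[OF cz] assms(10,11) by blast+
  moreover have "{w 0, w 1} \<in> E" "{w (m - 1), w 0} \<in> E"
    using cycle_param_edges_at_start[OF cw] sub by blast+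
  moreover have "h {w 0, w 1} = z 0 \<or> h {w (m - 1), w 0} = z 0"
    using odd_cycle_center_gets_cycle_edge[OF cw \<open>odd m\<close> sub(2,4) pref_w] \<open>w 0 = z 0\<close> by simp
  ultimately show False
    using odd_cycle_center_trapped[OF cz \<open>odd n\<close> sub(1,3) pref_z center] by blast
qed

end

lemma cycles_sharing_vertex_not_strongly_EFX_orientable:
  assumes cz: "cycle_param z n S Ed" and cw: "cycle_param w m S' Ed'"
    and "odd n" "odd m" and meet: "S \<inter> S' = {z 0}" "w 0 = z 0"
    and V: "V = S \<union> S'" and E: "E = Ed \<union> Ed'"
  shows "\<not> strongly_EFX_orientable V E"
proof -
  define L where "L v =
    (if v = z 0 then {{z 0, z 1}, {z (n - 1), z 0}}
     else if v \<in> S then {matched_edge True z (param_index z n v)}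
     else {matched_edge False w (param_index w m v)})" for v
  define f where "f = additive_val E (\<lambda>v e. of_bool (e \<in> L v))"
  have fin: "finite E"
    using cycle_param_finite_edges[OF cz] cycle_param_finite_edges[OF cw] E by simp
  have sub: "S \<subseteq> V" "S' \<subseteq> V" "Ed \<subseteq> E" "Ed' \<subseteq> E" using V E by auto
  have w_notin: "w j \<notin> S" "w j \<noteq> z 0" if "0 < j" "j < m" for j
    using cycle_param_ne_start[OF cw that] cycle_param_mem[OF cw, of j] meet by auto
  have pref_z: "prefers f E (z j) (matched_edge True z j)" if "1 \<le> j" "j < n" for j
    unfolding f_def using cycle_param_ne_start[OF cz, of j] cycle_param_mem[OF cz, of j] that
    by (intro prefers_liked_cycle_edge[OF fin cz sub(3)]) (auto simp: L_def)
  have pref_w: "prefers f E (w j) (matched_edge False w j)" if "1 \<le> j" "j < m" for j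
    unfolding f_def using w_notin[of j] that
    by (intro prefers_liked_cycle_edge[OF fin cw sub(4)]) (auto simp: L_def)
  have center: "prefers_pair f E (z 0) {z 0, z 1} {z (n - 1), z 0}"
    unfolding f_def by (rule prefers_pair_liked_cycle_edges[OF fin cz sub(3)]) (simp add: L_def)
  have "w 1 \<notin> S" "w (m - 1) \<notin> S" using w_notin cycle_param_length[OF cw] by auto
  show ?thesis
  proof (rule not_strongly_EFX_orientableI)
    show "graphical_instance V E f"
      unfolding f_def by (rule graphical_instance_additive_val[OF fin]) simp
    fix h assume "EFX_oriented V E f h"
    then interpret EFX_oriented V E f h .
    show False
      by (rule cycles_sharing_vertex_contradiction[OF cz cw \<open>odd n\<close> \<open>odd m\<close> sub meet(2)
            \<open>w 1 \<notin> S\<close> \<open>w (m - 1) \<notin> S\<close> pref_z pref_w center])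
  qed
qed

section \<open>Two odd cycles joined by a path\<close>

context EFX_oriented
begin

lemma cycles_joined_by_path_contradiction:
  assumes cz: "cycle_param z n S Ed" and cw: "cycle_param w m S' Ed'" and "odd n" "odd m"
    and sub: "S \<subseteq> V" "S' \<subseteq> V" "Ed \<subseteq> E" "Ed' \<subseteq> E"
    and path: "path_on V E p 0 l" and "1 \<le> l" "p 0 = z 0" "p l = w 0" "p 1 \<notin> S" "p (l - 1) \<notin> S'"
    and pref_p: "\<And>i. 1 \<le> i \<Longrightarrow> i < l \<Longrightarrow> prefers f E (p i) (matched_edge (even l) p i)"
    and pref_z: "\<And>j. 1 \<le> j \<Longrightarrow> j < n \<Longrightarrow> prefers f E (z j) (matched_edge (odd l) z j)"
    and pref_w: "\<And>j. 1 \<le> j \<Longrightarrow> j < m \<Longrightarrow> prefers f E (w j) (matched_edge True w j)"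
    and start: "if odd l then prefers_pair f E (z 0) {z 0, z 1} {z (n - 1), z 0}
                else prefers f E (z 0) {p 0, p 1}"
    and target: "prefers_pair f E (w 0) {w 0, w 1} {w (m - 1), w 0}"
  shows False
proof -
  have last_edge: "{p (l - 1), p l} \<in> E" "{p (l - 1), p l} \<notin> Ed'"
    using path_on_edge[OF path, of "l - 1"] \<open>1 \<le> l\<close> cycle_param_edge_subset[OF cw]
      \<open>p (l - 1) \<notin> S'\<close> by auto
  have first_edge: "{p 0, p 1} \<in> E" "{p 0, p 1} \<notin> Ed"
    using path_on_edge[OF path, of 0] \<open>1 \<le> l\<close> cycle_param_edge_subset[OF cz] \<open>p 1 \<notin> S\<close> by auto
  have "h {p (l - 1), p l} = p l"
  proof (cases "odd l")
    case True
    have "h {p 0, p 1} = p 1"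
    proof (rule ccontr)
      assume "h {p 0, p 1} \<noteq> p 1"
      then have "h {p 0, p 1} = z 0" using head_doubleton[OF first_edge(1)] \<open>p 0 = z 0\<close> by auto
      then show False
        using odd_cycle_center_trapped[OF cz \<open>odd n\<close> sub(1,3) _ _ first_edge(1,2)] pref_z start True
        by simp
    qed
    then show ?thesis
      using propagate_matching_from_path_edge[of p 1 l] path pref_p True \<open>1 \<le> l\<close> by simp
  next
    case False
    obtain a where a: "a \<in> Ed" "h a = z 0"
      using odd_cycle_center_gets_cycle_edge[OF cz \<open>odd n\<close> sub(1,3)] pref_z False
        cycle_param_edges_at_start[OF cz] by auto
    moreover have "a \<noteq> {p 0, p 1}" using \<open>a \<in> Ed\<close> first_edge(2) by blast
    moreover have "prefers f E (p i) (matched_edge (even 0) p i)" if "i < l" for i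
    proof (cases "i = 0")
      case True
      then show ?thesis using start \<open>\<not> odd l\<close> \<open>p 0 = z 0\<close> by (simp add: matched_edge_def)
    qed (use pref_p[of i] \<open>\<not> odd l\<close> that in simp)
    ultimately show ?thesis
      using propagate_matching[OF path, of a] a False \<open>1 \<le> l\<close> \<open>p 0 = z 0\<close> sub(3) by auto
  qed
  then show False
    using odd_cycle_center_trapped[OF cw \<open>odd m\<close> sub(2,4) pref_w target last_edge] \<open>p l = w 0\<close>
    by simp
qed

end

lemma cycles_joined_by_path_not_strongly_EFX_orientable:
  assumes cz: "cycle_param z n S Ed" and cw: "cycle_param w m S' Ed'" and "odd n" "odd m"
    and disj: "S \<inter> S' = {}" and "1 \<le> l" and inj: "inj_on p {..l}"
    and ends: "p 0 = z 0" "p l = w 0"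
    and meet: "p ` {..l} \<inter> S = {p 0}" "p ` {..l} \<inter> S' = {p l}"
    and V: "V = S \<union> S' \<union> p ` {..l}" and E: "E = Ed \<union> Ed' \<union> (\<lambda>i. {p i, p (Suc i)}) ` {..<l}"
  shows "\<not> strongly_EFX_orientable V E"
proof -
  \<comment> \<open>For odd \<open>l\<close> the start \<open>z 0\<close> is a trapped centre, for even \<open>l\<close> it begins the path matching.\<close>
  define L where "L v =
    (if v = w 0 then {{w 0, w 1}, {w (m - 1), w 0}}
     else if v = z 0 \<and> odd l then {{z 0, z 1}, {z (n - 1), z 0}}
     else if v \<in> S - {z 0} then {matched_edge (odd l) z (param_index z n v)}
     else if v \<in> S' then {matched_edge True w (param_index w m v)}
     else {matched_edge (even l) p (param_index p (Suc l) v)})" for v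
  define f where "f = additive_val E (\<lambda>v e. of_bool (e \<in> L v))"
  have fin: "finite E"
    using cycle_param_finite_edges[OF cz] cycle_param_finite_edges[OF cw] E by simp
  have sub: "S \<subseteq> V" "S' \<subseteq> V" "Ed \<subseteq> E" "Ed' \<subseteq> E" using V E by auto
  have path: "path_on V E p 0 l" by (rule path_on_of_inj_on[OF inj]) (use V E in auto)
  have p_notin_S: "p i \<notin> S" if "1 \<le> i" "i \<le> l" for i
    using meet(1) inj_onD[OF inj, of i 0] that by fastforce
  have p_notin_S': "p i \<notin> S'" if "i < l" for i
    using meet(2) inj_onD[OF inj, of i l] that by fastforce
  have zw: "z 0 \<noteq> w 0" using disj cycle_param_mem[OF cz, of 0] cycle_param_mem[OF cw, of 0] by auto
  have pref_p: "prefers f E (p i) (matched_edge (even l) p i)" if "1 \<le> i" "i < l" for i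
  proof -
    have "p i \<noteq> w 0" "p i \<noteq> z 0" "p i \<notin> S" "p i \<notin> S'"
      using p_notin_S[of i] p_notin_S'[of i] ends inj_onD[OF inj, of i l] inj_onD[OF inj, of i 0]
        that
      by auto
    then show ?thesis
      unfolding f_def
      using that by (intro prefers_liked_path_edge[OF fin path]) (simp_all add: L_def)
  qed
  have pref_z: "prefers f E (z j) (matched_edge (odd l) z j)" if "1 \<le> j" "j < n" for j
  proof -
    have "z j \<noteq> z 0" "z j \<noteq> w 0" "z j \<in> S"
      using cycle_param_ne_start[OF cz, of j] cycle_param_mem[OF cz, of j] disj
        cycle_param_mem[OF cw, of 0] that by auto
    then show ?thesis
      unfolding f_def
      using that by (intro prefers_liked_cycle_edge[OF fin cz sub(3)]) (simp_all add: L_def)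
  qed
  have pref_w: "prefers f E (w j) (matched_edge True w j)" if "1 \<le> j" "j < m" for j
  proof -
    have "w j \<noteq> w 0" "w j \<notin> S" "w j \<in> S'"
      using cycle_param_ne_start[OF cw, of j] cycle_param_mem[OF cw, of j] disj that by auto
    moreover have "w j \<noteq> z 0" using \<open>w j \<notin> S\<close> cycle_param_mem[OF cz, of 0] by auto
    ultimately show ?thesis
      unfolding f_def
      using that by (intro prefers_liked_cycle_edge[OF fin cw sub(4)]) (simp_all add: L_def)
  qed
  have start: "if odd l then prefers_pair f E (z 0) {z 0, z 1} {z (n - 1), z 0}
               else prefers f E (z 0) {p 0, p 1}"
  proof (cases "odd l")
    case True
    moreover have "L (z 0) = {{z 0, z 1}, {z (n - 1), z 0}}" using zw True by (simp add: L_def)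
    ultimately show ?thesis unfolding f_def
      using prefers_pair_liked_cycle_edges[OF fin cz sub(3)] by simp
  next
    case False
    have "z 0 \<notin> S'" using disj cycle_param_mem[OF cz, of 0] by auto
    then have "L (z 0) = {{p 0, p 1}}"
      using zw False ends param_index_eq[OF path_on_inj_on[OF path], of 0]
      by (simp add: L_def matched_edge_def)
    then show ?thesis
      using prefers_liked_edge[OF fin, of "{p 0, p 1}" "z 0" L] path_on_edge[OF path, of 0]
        \<open>1 \<le> l\<close> ends False by (simp add: f_def)
  qed
  have target: "prefers_pair f E (w 0) {w 0, w 1} {w (m - 1), w 0}"
    unfolding f_def by (rule prefers_pair_liked_cycle_edges[OF fin cw sub(4)]) (simp add: L_def)
  have "p 1 \<notin> S" "p (l - 1) \<notin> S'" using p_notin_S[of 1] p_notin_S'[of "l - 1"] \<open>1 \<le> l\<close> by auto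
  show ?thesis
  proof (rule not_strongly_EFX_orientableI)
    show "graphical_instance V E f"
      unfolding f_def by (rule graphical_instance_additive_val[OF fin]) simp
    fix h assume "EFX_oriented V E f h"
    then interpret EFX_oriented V E f h .
    show False
      by (rule cycles_joined_by_path_contradiction[OF cz cw \<open>odd n\<close> \<open>odd m\<close> sub path \<open>1 \<le> l\<close> ends
            \<open>p 1 \<notin> S\<close> \<open>p (l - 1) \<notin> S'\<close> pref_p pref_z pref_w start target])
  qed
qed

section \<open>Two odd cycles sharing an edge\<close>

text \<open>Two internally disjoint \<open>a\<close>--\<open>b\<close> paths \<open>z\<close> and \<open>w\<close> with an odd number of vertices,
  together with the chord \<open>ab\<close>: the union of two odd cycles that share the edge \<open>ab\<close>.\<close>
locale theta_graph =
  fixes V :: "'v set" and E :: "'v set set" and z w :: "nat \<Rightarrow> 'v" and n m :: nat and a b :: 'v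
  assumes odd: "odd n" "odd m" and long: "3 \<le> n" "3 \<le> m"
    and path_z: "path_on V E z 0 (n - 1)" and path_w: "path_on V E w 0 (m - 1)"
    and ends: "z 0 = a" "z (n - 1) = b" "w 0 = a" "w (m - 1) = b"
    and chord: "{a, b} \<in> E"
    and disjoint: "\<And>i j. 1 \<le> i \<Longrightarrow> i \<le> n - 2 \<Longrightarrow> 1 \<le> j \<Longrightarrow> j \<le> m - 2 \<Longrightarrow> z i \<noteq> w j"
begin

lemma z_inj: "i < j \<Longrightarrow> j \<le> n - 1 \<Longrightarrow> z i \<noteq> z j"
  using path_on_inj[OF path_z] by simp

lemma w_inj: "i < j \<Longrightarrow> j \<le> m - 1 \<Longrightarrow> w i \<noteq> w j"
  using path_on_inj[OF path_w] by simp

lemma z_vertex: "i \<le> n - 1 \<Longrightarrow> z i \<in> V" and w_vertex: "j \<le> m - 1 \<Longrightarrow> w j \<in> V"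
  using path_on_vertex[OF path_z] path_on_vertex[OF path_w] by simp_all

lemma z_inner_ne:
  assumes "1 \<le> i" "i \<le> n - 2"
  shows "z i \<noteq> a" "z i \<noteq> b"
proof -
  have "0 < i" "i < n - 1" using assms long by linarith+
  then show "z i \<noteq> a" "z i \<noteq> b" using z_inj[of 0 i] z_inj[of i "n - 1"] ends by auto
qed

lemma w_inner_ne:
  assumes "1 \<le> j" "j \<le> m - 2"
  shows "w j \<noteq> a" "w j \<noteq> b"
proof -
  have "0 < j" "j < m - 1" using assms long by linarith+
  then show "w j \<noteq> a" "w j \<noteq> b" using w_inj[of 0 j] w_inj[of j "m - 1"] ends by auto
qed

lemma a_ne_b: "a \<noteq> b"
  using z_inj[of 0 "n - 1"] long ends by simp

lemma theta_graph_reversed: "theta_graph V E (\<lambda>t. w (m - 1 - t)) (\<lambda>t. z (n - 1 - t)) m n b a"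
proof unfold_locales
  show "path_on V E (\<lambda>t. w (m - 1 - t)) 0 (m - 1)" "path_on V E (\<lambda>t. z (n - 1 - t)) 0 (n - 1)"
    using path_on_reverse path_w path_z by blast+
  show "{b, a} \<in> E" using chord by (simp add: insert_commute)
  show "w (m - 1 - i) \<noteq> z (n - 1 - j)" if "1 \<le> i" "i \<le> m - 2" "1 \<le> j" "j \<le> n - 2" for i j
  proof -
    have "1 \<le> n - 1 - j" "n - 1 - j \<le> n - 2" "1 \<le> m - 1 - i" "m - 1 - i \<le> m - 2"
      using that by arith+
    then show ?thesis using disjoint[of "n - 1 - j" "m - 1 - i"] by simp
  qed
qed (use odd long ends in simp_all)

end

locale EFX_theta = EFX_oriented V E f h + theta_graph V E z w n m a b
  for V E f h z w n m a b +
  assumes pref_z: "\<And>j. 1 \<le> j \<Longrightarrow> j \<le> n - 2 \<Longrightarrow> prefers f E (z j) (matched_edge False z j)"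
    and pref_w: "\<And>j. 1 \<le> j \<Longrightarrow> j \<le> m - 2 \<Longrightarrow> prefers f E (w j) (matched_edge True w j)"
    and pref_a: "prefers f E a {a, w 1}" and pref_b: "prefers f E b {b, z (n - 2)}"
    and chord_a: "prefers_pair f E a {a, w 1} {a, b}"
    and chord_b: "prefers_pair f E b {b, z (n - 2)} {b, a}"
begin

text \<open>Otherwise \<open>a\<close> holds nothing but \<open>{a, w 1}\<close>, so \<open>ab\<close> goes to \<open>b\<close> and propagation along \<open>z\<close>
  leaves no admissible head for \<open>{b, z (n - 2)}\<close>.\<close>
lemma head_first_edge_of_w: "h {a, w 1} = w 1"
proof (rule ccontr)
  assume "h {a, w 1} \<noteq> w 1"
  have G0: "{a, w 1} \<in> E" using path_on_edge[OF path_w, of 0] long ends by simp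
  then have hG0: "h {a, w 1} = a" using head_doubleton \<open>h {a, w 1} \<noteq> w 1\<close> by blast
  have aV: "a \<in> V" and bV: "b \<in> V" using z_vertex ends by auto
  have w1: "w 1 \<noteq> a" "w 1 \<noteq> b" "w 1 \<in> V"
    using w_inner_ne[of 1] w_vertex[of 1] long by auto
  have "prefers f E (w 1) {a, w 1}" using pref_w[of 1] long ends by (simp add: matched_edge_def)
  then have only_G0: "g = {a, w 1}" if "g \<in> E" "h g = a" for g
    using preferred_edge_alone[OF w1(3) aV _ G0 that(1) hG0 that(2)] w1 by simp
  have hAB: "h {a, b} = b"
    using head_doubleton[OF chord] only_G0[OF chord] w1 by (auto simp: doubleton_eq_iff)
  have "z 1 \<noteq> a" "z 1 \<noteq> w 1" using z_inner_ne[of 1] disjoint[of 1 1] long by auto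
  then have "h {z 0, z 1} = z 1"
    using head_doubleton only_G0 path_on_edge[OF path_z, of 0] long ends
    by (auto simp: doubleton_eq_iff)
  then have "h {z (n - 2 - 1), z (n - 2)} = z (n - 2)"
    using propagate_matching_from_path_edge[OF path_on_subpath[OF path_z], of 1 "n - 2"]
      pref_z odd long by simp
  moreover have "{z (n - 2 - 1), z (n - 2)} \<in> E" "{z (n - 2 - 1), z (n - 2)} \<noteq> {b, z (n - 2)}"
  proof -
    have "Suc (n - 2 - 1) = n - 2" "n - 2 - 1 < n - 1" using long by linarith+
    then show "{z (n - 2 - 1), z (n - 2)} \<in> E" "{z (n - 2 - 1), z (n - 2)} \<noteq> {b, z (n - 2)}"
      using path_on_edge[OF path_z, of "n - 2 - 1"] z_inj[of "n - 2 - 1" "n - 1"] ends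
      by (auto simp: doubleton_eq_iff)
  qed
  moreover have Gb: "{b, z (n - 2)} \<in> E"
    using path_on_edge[OF path_z, of "n - 2"] long ends
    by (simp add: insert_commute Suc_diff_Suc numeral_2_eq_2)
  moreover have "z (n - 2) \<noteq> b" "z (n - 2) \<in> V"
    using z_inner_ne[of "n - 2"] z_vertex[of "n - 2"] long by auto
  ultimately have "h {b, z (n - 2)} \<noteq> z (n - 2)"
    using preferred_edge_alone[OF bV _ pref_b] by blast
  then have "h {b, z (n - 2)} = b" using head_doubleton[OF Gb] by blast
  moreover have "prefers f E (z (n - 2)) {b, z (n - 2)}"
  proof -
    have "odd (n - 2)" "Suc (n - 2) = n - 1" "1 \<le> n - 2" using odd long by auto
    then show ?thesis using pref_z[of "n - 2"] ends by (simp add: matched_edge_def insert_commute)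
  qed
  ultimately have "{a, b} = {b, z (n - 2)}"
    using preferred_edge_alone[OF \<open>z (n - 2) \<in> V\<close> bV _ Gb chord _ hAB] \<open>z (n - 2) \<noteq> b\<close> by simp
  moreover have "z (n - 2) \<noteq> a" using z_inner_ne[of "n - 2"] long by simp
  ultimately show False using \<open>z (n - 2) \<noteq> b\<close> by (auto simp: doubleton_eq_iff)
qed

lemma head_last_edge_of_w: "h {w (m - 2), b} = b"
proof -
  have aV: "a \<in> V" and w1: "w 1 \<in> V" "w 1 \<noteq> a"
    using z_vertex[of 0] w_vertex[of 1] w_inner_ne[of 1] ends long by auto
  have G0: "{a, w 1} \<in> E" using path_on_edge[OF path_w, of 0] long ends by simp
  have G1: "{w 1, w 2} \<in> E" using path_on_edge[OF path_w, of 1] long by (simp add: numeral_2_eq_2)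
  have "2 \<le> m - 1" using long by linarith
  then have "w 2 \<noteq> a" using w_inj[of 0 2] ends by simp
  then have "{w 1, w 2} \<noteq> {a, w 1}" using w1 by (auto simp: doubleton_eq_iff)
  then have "h {w 1, w 2} \<noteq> w 1"
    using preferred_edge_alone[OF aV w1(1) pref_a G0 G1 head_first_edge_of_w] w1 by auto
  then have "h {w (2 - 1), w 2} = w 2" using head_doubleton[OF G1] by simp
  moreover have "path_on V E w (2 - 1) (m - 1)" using path_on_subpath[OF path_w] by simp
  moreover have "\<And>j. 2 \<le> j \<Longrightarrow> j < m - 1 \<Longrightarrow> prefers f E (w j) (matched_edge (even 2) w j)"
    using pref_w by simp
  moreover have "even (m - 1 - 2)" "2 \<le> m - 1" using odd long by auto
  ultimately have "h {w (m - 1 - 1), w (m - 1)} = w (m - 1)"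
    using propagate_matching_from_path_edge[of w 2 "m - 1"] by simp
  then show ?thesis using ends by (simp add: numeral_2_eq_2)
qed

text \<open>The assumptions are invariant under reversing both paths and swapping \<open>a\<close> and \<open>b\<close>; this
  yields the mirror images of the two lemmas above.\<close>
lemma EFX_theta_reversed: "EFX_theta V E f h (\<lambda>t. w (m - 1 - t)) (\<lambda>t. z (n - 1 - t)) m n b a"
proof (rule EFX_theta.intro)
  show "EFX_oriented V E f h" by (rule EFX_oriented.intro[OF graphical EFX])
  show "theta_graph V E (\<lambda>t. w (m - 1 - t)) (\<lambda>t. z (n - 1 - t)) m n b a"
    by (rule theta_graph_reversed)
  show "EFX_theta_axioms E f (\<lambda>t. w (m - 1 - t)) (\<lambda>t. z (n - 1 - t)) m n b a"
  proof
    show "prefers f E (w (m - 1 - j)) (matched_edge False (\<lambda>t. w (m - 1 - t)) j)"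
      if "1 \<le> j" "j \<le> m - 2" for j
      using pref_w[of "m - 1 - j"] matched_edge_reverse[of "m - 1" j False w] odd that by simp
    show "prefers f E (z (n - 1 - j)) (matched_edge True (\<lambda>t. z (n - 1 - t)) j)"
      if "1 \<le> j" "j \<le> n - 2" for j
      using pref_z[of "n - 1 - j"] matched_edge_reverse[of "n - 1" j True z] odd that by simp
    have "m - 1 - (m - 2) = 1" using long by simp
    then show "prefers f E a {a, w (m - 1 - (m - 2))}"
      "prefers_pair f E a {a, w (m - 1 - (m - 2))} {a, b}"
      using pref_a chord_a by simp_all
  qed (use pref_b chord_b in \<open>simp_all add: numeral_2_eq_2\<close>)
qed

lemma chord_not_oriented_to_a: "h {a, b} \<noteq> a"
proof
  assume hab: "h {a, b} = a"
  interpret rev: EFX_theta V E f h "\<lambda>t. w (m - 1 - t)" "\<lambda>t. z (n - 1 - t)" m n b a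
    by (rule EFX_theta_reversed)
  have "n - 1 - (n - 2) = 1" using long by simp
  then have "h {z 1, a} = a" using rev.head_last_edge_of_w by simp
  moreover have "{z 1, a} \<in> E"
    using path_on_edge[OF path_z, of 0] long ends by (simp add: insert_commute)
  moreover have "{z 1, a} \<noteq> {a, b}" using z_inner_ne[of 1] long by (auto simp: doubleton_eq_iff)
  moreover have "a \<in> V" "b \<in> V" using z_vertex ends by auto
  ultimately have "f b {{a, b}} \<le> f b (bundle_of E h b)"
    using bundle_value_ge_of_shared_head[of b a "{a, b}" "{z 1, a}"] chord hab by auto
  moreover have "h {b, z (n - 2)} = z (n - 2)"
    using rev.head_first_edge_of_w by (simp add: numeral_2_eq_2)
  then have "{b, z (n - 2)} \<notin> bundle_of E h b" "{b, a} \<notin> bundle_of E h b"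
    using hab a_ne_b z_inner_ne[of "n - 2"] long by (auto simp: bundle_of_def insert_commute)
  then have "f b (bundle_of E h b) < f b {{b, a}}"
    using chord_b bundle_subset unfolding prefers_pair_def by blast
  ultimately show False by (simp add: insert_commute)
qed

lemma theta_contradiction: False
proof -
  interpret rev: EFX_theta V E f h "\<lambda>t. w (m - 1 - t)" "\<lambda>t. z (n - 1 - t)" m n b a
    by (rule EFX_theta_reversed)
  show False
    using head_doubleton[OF chord] chord_not_oriented_to_a rev.chord_not_oriented_to_a
    by (auto simp: insert_commute)
qed

end

lemma cycles_sharing_edge_theta_graph:
  assumes cz: "cycle_param z n S Ed" and cw: "cycle_param w m S' Ed'" and "odd n" "odd m"
    and ends: "z 0 = a" "z (n - 1) = b" "w 0 = a" "w (m - 1) = b"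
    and meet: "S \<inter> S' = {a, b}" and V: "V = S \<union> S'" and E: "E = Ed \<union> Ed'"
  shows "theta_graph V E z w n m a b"
proof
  have sub: "S \<subseteq> V" "S' \<subseteq> V" "Ed \<subseteq> E" "Ed' \<subseteq> E" using V E by auto
  have n3: "3 \<le> n" and m3: "3 \<le> m" using cycle_param_length cz cw by blast+
  show "path_on V E z 0 (n - 1)" "path_on V E w 0 (m - 1)"
    using cycle_param_path_on[OF cz sub(1,3), of "n - 1" 0]
      cycle_param_path_on[OF cw sub(2,4), of "m - 1" 0]
      n3 m3 by simp_all
  show "{a, b} \<in> E" using cycle_param_edges_at_start[OF cz] sub ends by (auto simp: insert_commute)
  show "z i \<noteq> w j" if "1 \<le> i" "i \<le> n - 2" "1 \<le> j" "j \<le> m - 2" for i j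
  proof -
    have "0 < i" "i < n - 1" "i < n" using that n3 by linarith+
    then have "z i \<noteq> a" "z i \<noteq> b"
      using cycle_param_inj_window[OF cz, of 0 0 i] cycle_param_inj_window[OF cz, of 0 i "n - 1"]
        ends by auto
    then have "z i \<notin> S \<inter> S'" using meet by simp
    then have "z i \<notin> S'" using cycle_param_mem[OF cz, of i] by simp
    then show ?thesis using cycle_param_mem[OF cw, of j] by metis
  qed
qed (use \<open>odd n\<close> \<open>odd m\<close> cycle_param_length[OF cz] cycle_param_length[OF cw] ends in auto)

lemma cycles_sharing_edge_not_strongly_EFX_orientable:
  assumes cz: "cycle_param z n S Ed" and cw: "cycle_param w m S' Ed'" and "odd n" "odd m"
    and ends: "z 0 = a" "z (n - 1) = b" "w 0 = a" "w (m - 1) = b"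
    and meet: "S \<inter> S' = {a, b}" and V: "V = S \<union> S'" and E: "E = Ed \<union> Ed'"
  shows "\<not> strongly_EFX_orientable V E"
proof -
  interpret theta_graph V E z w n m a b
    by (rule cycles_sharing_edge_theta_graph[OF assms])
  \<comment> \<open>The favourite edge must beat \<open>ab\<close>, but \<open>ab\<close> must be worth something for the final envy.\<close>
  define wt where "wt v e =
    (if v = a then 2 * of_bool (e = {a, w 1}) + of_bool (e = {a, b})
     else if v = b then 2 * of_bool (e = {b, z (n - 2)}) + of_bool (e = {b, a})
     else if v \<in> S then of_bool (e = matched_edge False z (param_index z n v))
     else of_bool (e = matched_edge True w (param_index w m v)) :: real)" for v e
  define f where "f = additive_val E wt"
  have fin: "finite E"
    using cycle_param_finite_edges[OF cz] cycle_param_finite_edges[OF cw] E by simp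
  have sub: "Ed \<subseteq> E" "Ed' \<subseteq> E" using E by auto
  have pref_z: "prefers f E (z j) (matched_edge False z j)" if "1 \<le> j" "j \<le> n - 2" for j
    unfolding f_def
  proof (rule prefers_additive_val[OF fin _ matched_edge_mem])
    have "j < n" using that long by linarith
    then show "0 < wt (z j) (matched_edge False z j)"
      "\<And>e. e \<noteq> matched_edge False z j \<Longrightarrow> wt (z j) e = 0"
      using z_inner_ne[OF that] cycle_param_mem[OF cz, of j]
        param_index_eq[OF cycle_param_inj_on[OF cz]] by (simp_all add: wt_def)
  qed (use cycle_param_matched_edge[OF cz that(1)] sub in auto)
  have pref_w: "prefers f E (w j) (matched_edge True w j)" if "1 \<le> j" "j \<le> m - 2" for j
    unfolding f_def
  proof (rule prefers_additive_val[OF fin _ matched_edge_mem])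
    have "w j \<notin> S" using w_inner_ne[OF that] cycle_param_mem[OF cw, of j] meet by auto
    moreover have "j < m" using that long by linarith
    ultimately show "0 < wt (w j) (matched_edge True w j)"
      "\<And>e. e \<noteq> matched_edge True w j \<Longrightarrow> wt (w j) e = 0"
      using w_inner_ne[OF that] param_index_eq[OF cycle_param_inj_on[OF cw]]
      by (simp_all add: wt_def)
  qed (use cycle_param_matched_edge[OF cw that(1)] sub in auto)
  have "{a, w 1} \<in> E" using cycle_param_edges_at_start[OF cw] sub ends by auto
  moreover have "{b, z (n - 2)} \<in> E"
    using cycle_param_edge[OF cz, of "n - 2"] sub ends long
    by (auto simp: insert_commute numeral_2_eq_2 Suc_diff_Suc)
  moreover have "w 1 \<noteq> b" "z (n - 2) \<noteq> a" using w_inner_ne[of 1] z_inner_ne[of "n - 2"] long by auto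
  ultimately have ends_pref: "prefers f E a {a, w 1}" "prefers_pair f E a {a, w 1} {a, b}"
    "prefers f E b {b, z (n - 2)}" "prefers_pair f E b {b, z (n - 2)} {b, a}"
    unfolding f_def using prefers_favourite_additive_val[OF fin] chord a_ne_b
    by (simp_all add: wt_def doubleton_eq_iff insert_commute)
  show ?thesis
  proof (rule not_strongly_EFX_orientableI)
    show "graphical_instance V E f"
      unfolding f_def by (rule graphical_instance_additive_val[OF fin]) (simp add: wt_def)
    fix h assume "EFX_oriented V E f h"
    then interpret EFX_theta V E f h z w n m a b
      by (rule EFX_theta.intro[OF _ theta_graph_axioms
            EFX_theta_axioms.intro[OF pref_z pref_w ends_pref(1,3,2,4)]])
    show False by (rule theta_contradiction)
  qed
qed

section \<open>The three graph families\<close>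

lemma odd_cycle_centered_param:
  assumes "is_odd_cycle xs" "c \<in> set xs"
  obtains z where "cycle_param z (length xs) (set xs) (cycle_edges xs)" "z 0 = c" "odd (length xs)"
  using cycle_param_recenter[OF cycle_param_of_list] assms by (metis is_odd_cycle_def)

lemma two_odd_cycles_sharing_vertex_not_strongly_EFX_orientable:
  assumes "two_odd_cycles_sharing_vertex V E"
  shows "\<not> strongly_EFX_orientable V E"
proof -
  obtain xs ys a where "is_odd_cycle xs" "is_odd_cycle ys" and meet: "set xs \<inter> set ys = {a}"
    and "V = set xs \<union> set ys" "E = cycle_edges xs \<union> cycle_edges ys"
    using assms unfolding two_odd_cycles_sharing_vertex_def by blast
  moreover obtain z where
    "cycle_param z (length xs) (set xs) (cycle_edges xs)" "z 0 = a" "odd (length xs)"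
    using odd_cycle_centered_param[OF \<open>is_odd_cycle xs\<close>] meet by blast
  moreover obtain w where
    "cycle_param w (length ys) (set ys) (cycle_edges ys)" "w 0 = a" "odd (length ys)"
    using odd_cycle_centered_param[OF \<open>is_odd_cycle ys\<close>] meet by blast
  ultimately show ?thesis
    using cycles_sharing_vertex_not_strongly_EFX_orientable by metis
qed

lemma two_odd_cycles_sharing_edge_not_strongly_EFX_orientable:
  assumes "two_odd_cycles_sharing_edge V E"
  shows "\<not> strongly_EFX_orientable V E"
proof -
  obtain xs ys a b where ox: "is_odd_cycle xs" and oy: "is_odd_cycle ys"
    and meet: "set xs \<inter> set ys = {a, b}" and ab: "{a, b} \<in> cycle_edges xs" "{a, b} \<in> cycle_edges ys"
    and V: "V = set xs \<union> set ys" and E: "E = cycle_edges xs \<union> cycle_edges ys"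
    using assms unfolding two_odd_cycles_sharing_edge_def by blast
  obtain z where "cycle_param z (length xs) (set xs) (cycle_edges xs)"
      "z 0 = a" "z (length xs - 1) = b"
    using cycle_param_through_edge[OF cycle_param_of_list ab(1)] ox by (auto simp: is_odd_cycle_def)
  moreover obtain w where "cycle_param w (length ys) (set ys) (cycle_edges ys)"
      "w 0 = a" "w (length ys - 1) = b"
    using cycle_param_through_edge[OF cycle_param_of_list ab(2)] oy by (auto simp: is_odd_cycle_def)
  ultimately show ?thesis
    using cycles_sharing_edge_not_strongly_EFX_orientable[OF _ _ _ _ _ _ _ _ meet V E] ox oy
    by (auto simp: is_odd_cycle_def)
qed

lemma two_odd_cycles_joined_by_path_not_strongly_EFX_orientable:
  assumes "two_odd_cycles_joined_by_path V E"
  shows "\<not> strongly_EFX_orientable V E"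
proof -
  obtain xs ys ps where ox: "is_odd_cycle xs" and oy: "is_odd_cycle ys"
    and disj: "set xs \<inter> set ys = {}" and path: "is_path ps"
    and hx: "hd ps \<in> set xs" and ly: "last ps \<in> set ys"
    and meet: "set ps \<inter> set xs = {hd ps}" "set ps \<inter> set ys = {last ps}"
    and V: "V = set xs \<union> set ys \<union> set ps"
    and E: "E = cycle_edges xs \<union> cycle_edges ys \<union> path_edges ps"
    using assms unfolding two_odd_cycles_joined_by_path_def by blast
  define l where "l = length ps - 1"
  have len: "length ps = Suc l" "1 \<le> l" using path by (auto simp: is_path_def l_def)
  have ne: "ps \<noteq> []" using len by auto
  have set_ps: "(!) ps ` {..l} = set ps" using len by (auto simp: set_conv_nth image_def)
  have inj: "inj_on ((!) ps) {..l}"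
    using path len by (auto simp: is_path_def inj_on_def nth_eq_iff_index_eq)
  have ends: "ps ! 0 = hd ps" "ps ! l = last ps"
    using ne by (simp_all add: hd_conv_nth last_conv_nth l_def)
  have "path_edges ps = (\<lambda>i. {ps ! i, ps ! Suc i}) ` {..<l}"
    using len by (auto simp: path_edges_def)
  then have V': "V = set xs \<union> set ys \<union> (!) ps ` {..l}"
    and E': "E = cycle_edges xs \<union> cycle_edges ys \<union> (\<lambda>i. {ps ! i, ps ! Suc i}) ` {..<l}"
    using V E set_ps by simp_all
  obtain z where cz: "cycle_param z (length xs) (set xs) (cycle_edges xs)" "z 0 = hd ps"
      "odd (length xs)"
    using odd_cycle_centered_param[OF ox hx] by blast
  obtain w where cw: "cycle_param w (length ys) (set ys) (cycle_edges ys)" "w 0 = last ps"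
      "odd (length ys)"
    using odd_cycle_centered_param[OF oy ly] by blast
  show ?thesis
    using cycles_joined_by_path_not_strongly_EFX_orientable[OF cz(1) cw(1) cz(3) cw(3) disj len(2)
        inj _ _ _ _ V' E'] ends cz(2) cw(2) meet set_ps by (simp add: Int_commute)
qed

theorem mainTheorem13:
  fixes V :: "'v set" and E :: "'v set set"
  shows "(two_odd_cycles_sharing_edge V E \<longrightarrow> \<not> strongly_EFX_orientable V E) \<and>
         (two_odd_cycles_sharing_vertex V E \<longrightarrow> \<not> strongly_EFX_orientable V E) \<and>
         (two_odd_cycles_joined_by_path V E \<longrightarrow> \<not> strongly_EFX_orientable V E)"
  using two_odd_cycles_sharing_edge_not_strongly_EFX_orientable
    two_odd_cycles_sharing_vertex_not_strongly_EFX_orientable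
    two_odd_cycles_joined_by_path_not_strongly_EFX_orientable by blast

end
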